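(* Let $H$ be a group, $A$ either the empty set or a normal subgroup of $H$, and for $1\leq l\leq m$ let $\mathcal E_{l,m}$ be the subgroup generated by all $[x_1,\ldots,x_i]^{2^{m-i-k}}$ with $l\leq i\leq m$, $0\leq k\leq m-i$, $x_1,\ldots,x_i\in H$ and at least $k$ of the entries $x_{j_1},\ldots,x_{j_k}$ ($j_1<\cdots<j_k$) lying in $A$; write $\widetilde{\mathcal E}_{l,m}$ when $A=\varnothing$. Then for all $1\leq l\leq m$, $[\mathcal E_{l,m},H]\subseteq\mathcal E_{l+1,m+1}$ and $[\widetilde{\mathcal E}_{l,m},H]\subseteq\widetilde{\mathcal E}_{l+1,m+1}$.
   Context: $[a,b]=aba^{-1}b^{-1}$; right-normed iterated commutators $[x_1,\ldots,x_n]=[x_1,[x_2,\ldots,[x_{n-1},x_n]]]$. *)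

theory Defs
  imports "HOL-Algebra.Algebra"
begin

definition gcomm :: "('a, 'b) monoid_scheme \<Rightarrow> 'a \<Rightarrow> 'a \<Rightarrow> 'a" where
  "gcomm G a b = a \<otimes>\<^bsub>G\<^esub> b \<otimes>\<^bsub>G\<^esub> inv\<^bsub>G\<^esub> a \<otimes>\<^bsub>G\<^esub> inv\<^bsub>G\<^esub> b"

fun itcomm :: "('a, 'b) monoid_scheme \<Rightarrow> 'a list \<Rightarrow> 'a" where
  "itcomm G [] = \<one>\<^bsub>G\<^esub>"
| "itcomm G [x] = x"
| "itcomm G (x # y # xs) = gcomm G x (itcomm G (y # xs))"

definition comm_sub :: "('a, 'b) monoid_scheme \<Rightarrow> 'a set \<Rightarrow> 'a set \<Rightarrow> 'a set" where
  "comm_sub G S T = generate G {gcomm G x y | x y. x \<in> S \<and> y \<in> T}"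

definition E :: "('a, 'b) monoid_scheme \<Rightarrow> 'a set \<Rightarrow> nat \<Rightarrow> nat \<Rightarrow> 'a set" where
  "E G A l m = generate G
     {itcomm G xs [^]\<^bsub>G\<^esub> ((2::nat) ^ (m - i - k)) | xs i k.
        l \<le> i \<and> i \<le> m \<and> k \<le> m - i \<and> length xs = i \<and> set xs \<subseteq> carrier G \<and>
        k \<le> card {j. j < i \<and> xs ! j \<in> A}}"

end

theory Submission
  imports Defs
begin

text \<open>Induction on 2m - l. A generator [x1,...,xi]^(2^(m-i-k)) of E(l,m) with exponent 1
  commutes with h into the generator [h,x1,...,xi] of E(l+1,m+1). Otherwise it is a square y^2
  with y in E(l,m-1), and [y^2,h] = [y,u] u^2 with u = [y,h] in E(l+1,m) by induction. Again by
  induction [y,u] lies in E(l+2,m+1), and u^2 lies in E(l+1,m+1) because squaring the generators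
  of E(l+1,m) lands there and (ab)^2 = a^2 [a^-1,b] b^2, with the commutator in E(l+2,m+1).
  All E(l,m) are normal, so it suffices to commute generators.\<close>

context group
begin

lemma mult_inv_cancel_left: "a \<in> carrier G \<Longrightarrow> x \<in> carrier G \<Longrightarrow> a \<otimes> (inv a \<otimes> x) = x"
  by (simp add: m_assoc[symmetric])

lemma inv_mult_cancel_left: "a \<in> carrier G \<Longrightarrow> x \<in> carrier G \<Longrightarrow> inv a \<otimes> (a \<otimes> x) = x"
  by (simp add: m_assoc[symmetric])

lemmas group_word_simps = m_assoc inv_mult_group mult_inv_cancel_left inv_mult_cancel_left

lemma gcomm_closed [simp]: "a \<in> carrier G \<Longrightarrow> b \<in> carrier G \<Longrightarrow> gcomm G a b \<in> carrier G"
  by (simp add: gcomm_def)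

lemma itcomm_closed [simp]: "set xs \<subseteq> carrier G \<Longrightarrow> itcomm G xs \<in> carrier G"
  by (induction xs rule: induct_list012) auto

lemma itcomm_Cons: "xs \<noteq> [] \<Longrightarrow> itcomm G (x # xs) = gcomm G x (itcomm G xs)"
  by (cases xs) auto

lemma inv_gcomm: "a \<in> carrier G \<Longrightarrow> b \<in> carrier G \<Longrightarrow> inv (gcomm G a b) = gcomm G b a"
  by (simp add: gcomm_def group_word_simps)

lemma gcomm_mult_left: "a \<in> carrier G \<Longrightarrow> b \<in> carrier G \<Longrightarrow> h \<in> carrier G \<Longrightarrow>
    gcomm G (a \<otimes> b) h = a \<otimes> gcomm G b h \<otimes> inv a \<otimes> gcomm G a h"
  by (simp add: gcomm_def group_word_simps)

lemma gcomm_inv_left: "a \<in> carrier G \<Longrightarrow> h \<in> carrier G \<Longrightarrow>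
    gcomm G (inv a) h = inv a \<otimes> inv (gcomm G a h) \<otimes> a"
  by (simp add: gcomm_def group_word_simps)

lemma gcomm_square_left: "a \<in> carrier G \<Longrightarrow> h \<in> carrier G \<Longrightarrow>
    gcomm G (a \<otimes> a) h = gcomm G a (gcomm G a h) \<otimes> (gcomm G a h \<otimes> gcomm G a h)"
  by (simp add: gcomm_def group_word_simps)

lemma square_mult: "a \<in> carrier G \<Longrightarrow> b \<in> carrier G \<Longrightarrow>
    (a \<otimes> b) \<otimes> (a \<otimes> b) = (a \<otimes> a) \<otimes> gcomm G (inv a) b \<otimes> (b \<otimes> b)"
  by (simp add: gcomm_def group_word_simps)

lemma conj_gcomm: "g \<in> carrier G \<Longrightarrow> a \<in> carrier G \<Longrightarrow> b \<in> carrier G \<Longrightarrow>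
    g \<otimes> gcomm G a b \<otimes> inv g = gcomm G (g \<otimes> a \<otimes> inv g) (g \<otimes> b \<otimes> inv g)"
  by (simp add: gcomm_def group_word_simps)

lemma conj_nat_pow:
  assumes "g \<in> carrier G" "a \<in> carrier G"
  shows "g \<otimes> a [^] (n::nat) \<otimes> inv g = (g \<otimes> a \<otimes> inv g) [^] n"
proof (induction n)
  case (Suc n)
  have "g \<otimes> a [^] Suc n \<otimes> inv g = (g \<otimes> a [^] n \<otimes> inv g) \<otimes> (g \<otimes> a \<otimes> inv g)"
    using assms by (simp add: group_word_simps)
  with Suc show ?case by simp
qed (use assms in simp)

lemma conj_itcomm: "g \<in> carrier G \<Longrightarrow> xs \<noteq> [] \<Longrightarrow> set xs \<subseteq> carrier G \<Longrightarrow>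
    g \<otimes> itcomm G xs \<otimes> inv g = itcomm G (map (\<lambda>x. g \<otimes> x \<otimes> inv g) xs)"
  by (induction xs rule: induct_list012) (simp_all add: conj_gcomm)

lemma normal_conj_mem_iff:
  assumes "N \<lhd> G" "g \<in> carrier G" "y \<in> carrier G"
  shows "g \<otimes> y \<otimes> inv g \<in> N \<longleftrightarrow> y \<in> N"
proof
  assume "g \<otimes> y \<otimes> inv g \<in> N"
  then have "inv g \<otimes> (g \<otimes> y \<otimes> inv g) \<otimes> inv (inv g) \<in> N"
    using normal_invE(2)[OF assms(1), of "inv g"] assms(2) by simp
  then show "y \<in> N"
    using assms(2,3) by (simp add: group_word_simps)
qed (use normal_invE(2)[OF assms(1)] assms(2) in simp)

lemma subgroup_gcomm_swap:
  "subgroup N G \<Longrightarrow> a \<in> carrier G \<Longrightarrow> b \<in> carrier G \<Longrightarrow> gcomm G a b \<in> N \<Longrightarrow> gcomm G b a \<in> N"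
  by (metis inv_gcomm subgroup.m_inv_closed)

lemma comm_sub_generate_subset:
  assumes S: "S \<subseteq> carrier G" and N: "N \<lhd> G"
    and gens: "\<And>s h. s \<in> S \<Longrightarrow> h \<in> carrier G \<Longrightarrow> gcomm G s h \<in> N"
  shows "comm_sub G (generate G S) (carrier G) \<subseteq> N"
proof -
  interpret N: normal N G by (rule N)
  have "gcomm G a h \<in> N" if "a \<in> generate G S" "h \<in> carrier G" for a h
    using that(1)
  proof (induction rule: generate.induct)
    case one
    then show ?case using that(2) by (simp add: gcomm_def)
  next
    case (incl s)
    then show ?case using gens that(2) by blast
  next
    case (inv s)
    have s: "s \<in> carrier G" using inv S by blast
    have "inv s \<otimes> inv (gcomm G s h) \<otimes> inv (inv s) \<in> N"
      using gens[OF inv that(2)] s by (intro normal_invE(2)[OF N]) auto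
    then show ?case using gcomm_inv_left[OF s that(2)] s by simp
  next
    case (eng a b)
    have ab: "a \<in> carrier G" "b \<in> carrier G"
      using eng.hyps generate_in_carrier[OF S] by auto
    have "a \<otimes> gcomm G b h \<otimes> inv a \<in> N"
      using eng.IH(2) ab(1) by (rule normal_invE(2)[OF N, rotated])
    then show ?case
      using eng.IH(1) by (simp add: gcomm_mult_left[OF ab that(2)])
  qed
  then show ?thesis
    unfolding comm_sub_def by (intro generate_subgroup_incl[OF _ N.subgroup_axioms]) blast
qed

lemma generate_square_closed:
  assumes S: "S \<subseteq> carrier G" and N: "subgroup N G"
    and gens: "\<And>s. s \<in> S \<Longrightarrow> s \<otimes> s \<in> N"
    and comm: "\<And>a b. a \<in> generate G S \<Longrightarrow> b \<in> generate G S \<Longrightarrow> gcomm G a b \<in> N"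
    and a: "a \<in> generate G S"
  shows "a \<otimes> a \<in> N"
  using a
proof (induction rule: generate.induct)
  case one
  then show ?case using subgroup.one_closed[OF N] by simp
next
  case (incl s)
  then show ?case by (rule gens)
next
  case (inv s)
  have "s \<in> carrier G" using inv S by blast
  then have "inv s \<otimes> inv s = inv (s \<otimes> s)" by (simp add: inv_mult_group)
  then show ?case using subgroup.m_inv_closed[OF N gens[OF inv]] by simp
next
  case (eng a b)
  have ab: "a \<in> carrier G" "b \<in> carrier G"
    using eng.hyps generate_in_carrier[OF S] by auto
  have "gcomm G (inv a) b \<in> N"
    using comm[OF generate_m_inv_closed[OF S eng.hyps(1)] eng.hyps(2)] .
  then show ?case
    using eng.IH by (simp add: square_mult[OF ab] subgroup.m_closed[OF N])
qed

end

definition E_gens :: "('a, 'b) monoid_scheme \<Rightarrow> 'a set \<Rightarrow> nat \<Rightarrow> nat \<Rightarrow> 'a set" where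
  "E_gens G A l m =
     {itcomm G xs [^]\<^bsub>G\<^esub> ((2::nat) ^ (m - i - k)) | xs i k.
        l \<le> i \<and> i \<le> m \<and> k \<le> m - i \<and> length xs = i \<and> set xs \<subseteq> carrier G \<and>
        k \<le> card {j. j < i \<and> xs ! j \<in> A}}"

lemma E_eq_generate_E_gens: "E G A l m = generate G (E_gens G A l m)"
  unfolding E_def E_gens_def by simp

lemma E_gensI:
  "l \<le> i \<Longrightarrow> i \<le> m \<Longrightarrow> k \<le> m - i \<Longrightarrow> length xs = i \<Longrightarrow> set xs \<subseteq> carrier G \<Longrightarrow>
   k \<le> card {j. j < i \<and> xs ! j \<in> A} \<Longrightarrow>
   itcomm G xs [^]\<^bsub>G\<^esub> ((2::nat) ^ (m - i - k)) \<in> E_gens G A l m"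
  unfolding E_gens_def by blast

lemma E_gensE:
  assumes "y \<in> E_gens G A l m"
  obtains xs i k where "y = itcomm G xs [^]\<^bsub>G\<^esub> ((2::nat) ^ (m - i - k))"
    "l \<le> i" "i \<le> m" "k \<le> m - i" "length xs = i" "set xs \<subseteq> carrier G"
    "k \<le> card {j. j < i \<and> xs ! j \<in> A}"
  using assms unfolding E_gens_def by blast

lemma card_nth_mem_le_Cons:
  "card {j. j < length xs \<and> xs ! j \<in> A} \<le> card {j. j < length (x # xs) \<and> (x # xs) ! j \<in> A}"
proof -
  have "card {j. j < length xs \<and> xs ! j \<in> A} = card (Suc ` {j. j < length xs \<and> xs ! j \<in> A})"
    by (simp add: card_image)
  also have "\<dots> \<le> card {j. j < length (x # xs) \<and> (x # xs) ! j \<in> A}"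
    by (rule card_mono) auto
  finally show ?thesis .
qed

context group
begin

lemma E_gens_subset_carrier: "E_gens G A l m \<subseteq> carrier G"
  unfolding E_gens_def by auto

lemma subgroup_E: "subgroup (E G A l m) G"
  unfolding E_eq_generate_E_gens by (rule generate_is_subgroup[OF E_gens_subset_carrier])

lemma E_subset_carrier: "E G A l m \<subseteq> carrier G"
  using subgroup_E subgroup.subset by blast

lemma E_antimono: "l \<le> l' \<Longrightarrow> E G A l' m \<subseteq> E G A l m"
  unfolding E_eq_generate_E_gens
  by (rule mono_generate) (unfold E_gens_def, blast intro: order_trans)

lemma E_normal:
  assumes A: "A = {} \<or> A \<lhd> G" and l: "1 \<le> l"
  shows "E G A l m \<lhd> G"
  unfolding E_eq_generate_E_gens
proof (rule normal_generateI[OF E_gens_subset_carrier])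
  fix y g assume y: "y \<in> E_gens G A l m" and g: "g \<in> carrier G"
  from y obtain xs i k where y_eq: "y = itcomm G xs [^] ((2::nat) ^ (m - i - k))"
    and c: "l \<le> i" "i \<le> m" "k \<le> m - i" "length xs = i" "set xs \<subseteq> carrier G"
      "k \<le> card {j. j < i \<and> xs ! j \<in> A}"
    by (rule E_gensE)
  define ys where "ys = map (\<lambda>x. g \<otimes> x \<otimes> inv g) xs"
  have "xs \<noteq> []" using c l by auto
  then have conj: "g \<otimes> y \<otimes> inv g = itcomm G ys [^] ((2::nat) ^ (m - i - k))"
    unfolding y_eq ys_def using c g by (simp add: conj_nat_pow conj_itcomm)
  have "ys ! j \<in> A \<longleftrightarrow> xs ! j \<in> A" if "j < i" for j
  proof -
    have "xs ! j \<in> carrier G" using c that by auto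
    then show ?thesis
      using A normal_conj_mem_iff[OF _ g] c that by (auto simp: ys_def)
  qed
  then have "{j. j < i \<and> ys ! j \<in> A} = {j. j < i \<and> xs ! j \<in> A}" by blast
  moreover have "set ys \<subseteq> carrier G" "length ys = i" using c g by (auto simp: ys_def)
  ultimately show "g \<otimes> y \<otimes> inv g \<in> E_gens G A l m"
    unfolding conj using c by (intro E_gensI) auto
qed

lemma E_gens_square: "s \<in> E_gens G A l m \<Longrightarrow> s \<otimes> s \<in> E_gens G A l (m + 1)"
proof (elim E_gensE)
  fix xs i k assume s: "s = itcomm G xs [^] ((2::nat) ^ (m - i - k))"
    and c: "l \<le> i" "i \<le> m" "k \<le> m - i" "length xs = i" "set xs \<subseteq> carrier G"
      "k \<le> card {j. j < i \<and> xs ! j \<in> A}"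
  have "(2::nat) ^ (m - i - k) + 2 ^ (m - i - k) = 2 ^ (m + 1 - i - k)"
    using c by (simp add: Suc_diff_le)
  then have "s \<otimes> s = itcomm G xs [^] ((2::nat) ^ (m + 1 - i - k))"
    unfolding s using c by (metis itcomm_closed nat_pow_mult)
  also have "\<dots> \<in> E_gens G A l (m + 1)"
    using c by (intro E_gensI) auto
  finally show ?thesis .
qed

lemma E_gens_cases:
  assumes y: "y \<in> E_gens G A l m" and l: "1 \<le> l"
  obtains (commutator) "\<And>h. h \<in> carrier G \<Longrightarrow> gcomm G h y \<in> E_gens G A (l + 1) (m + 1)"
    | (square) z where "y = z \<otimes> z" "z \<in> E_gens G A l (m - 1)" "l < m"
proof -
  obtain xs i k where y_eq: "y = itcomm G xs [^] ((2::nat) ^ (m - i - k))"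
    and c: "l \<le> i" "i \<le> m" "k \<le> m - i" "length xs = i" "set xs \<subseteq> carrier G"
      "k \<le> card {j. j < i \<and> xs ! j \<in> A}"
    using y by (rule E_gensE)
  have xs: "itcomm G xs \<in> carrier G" using c by simp
  show ?thesis
  proof (cases "m - i - k = 0")
    case True
    have "gcomm G h y \<in> E_gens G A (l + 1) (m + 1)" if h: "h \<in> carrier G" for h
    proof -
      have "itcomm G (h # xs) [^] ((2::nat) ^ (m + 1 - (i + 1) - k)) \<in> E_gens G A (l + 1) (m + 1)"
        using c h card_nth_mem_le_Cons[of xs A h] by (intro E_gensI) auto
      moreover have "xs \<noteq> []" using c l by auto
      ultimately show ?thesis
        using True xs h by (simp add: y_eq itcomm_Cons)
    qed
    then show ?thesis by (rule commutator)
  next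
    case False
    define z where "z = itcomm G xs [^] ((2::nat) ^ (m - 1 - i - k))"
    have "m - i - k = Suc (m - 1 - i - k)" using False by simp
    then have "(2::nat) ^ (m - 1 - i - k) + 2 ^ (m - 1 - i - k) = 2 ^ (m - i - k)"
      by (metis mult_2 power_Suc)
    then have "y = z \<otimes> z"
      unfolding y_eq z_def by (metis xs nat_pow_mult)
    moreover have "z \<in> E_gens G A l (m - 1)"
      unfolding z_def using c False by (intro E_gensI) auto
    moreover have "l < m" using c False by linarith
    ultimately show ?thesis by (rule square)
  qed
qed

lemma E_square_closed:
  assumes comm: "\<And>a b. a \<in> E G A l m \<Longrightarrow> b \<in> E G A l m \<Longrightarrow> gcomm G a b \<in> E G A l (m + 1)"
    and a: "a \<in> E G A l m"
  shows "a \<otimes> a \<in> E G A l (m + 1)"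
proof (rule generate_square_closed[OF E_gens_subset_carrier subgroup_E])
  show "s \<otimes> s \<in> E G A l (m + 1)" if "s \<in> E_gens G A l m" for s
    using E_gens_square[OF that] unfolding E_eq_generate_E_gens by (rule generate.incl)
qed (use comm a in \<open>simp_all add: E_eq_generate_E_gens\<close>)

lemma comm_sub_E_subset:
  assumes A: "A = {} \<or> A \<lhd> G"
  shows "1 \<le> l \<Longrightarrow> l \<le> m \<Longrightarrow> comm_sub G (E G A l m) (carrier G) \<subseteq> E G A (l + 1) (m + 1)"
proof (induction "2 * m - l" arbitrary: l m rule: less_induct)
  case less
  let ?N = "E G A (l + 1) (m + 1)"
  have N: "subgroup ?N G" by (rule subgroup_E)
  have N_normal: "?N \<lhd> G" using E_normal[OF A] by simp
  have comm_E: "gcomm G a h \<in> E G A (l' + 1) (m' + 1)"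
    if "a \<in> E G A l' m'" "h \<in> carrier G" "1 \<le> l'" "l' \<le> m'" "2 * m' - l' < 2 * m - l" for a h l' m'
    using less.hyps[OF that(5,3,4)] that(1,2) unfolding comm_sub_def by (blast intro: generate.incl)
  show ?case
    unfolding E_eq_generate_E_gens[of G A l m]
  proof (rule comm_sub_generate_subset[OF E_gens_subset_carrier N_normal])
    fix y h assume y: "y \<in> E_gens G A l m" and h: "h \<in> carrier G"
    have y_carrier: "y \<in> carrier G" using y E_gens_subset_carrier by blast
    from y less.prems(1) show "gcomm G y h \<in> ?N"
    proof (cases rule: E_gens_cases)
      case commutator
      then have "gcomm G h y \<in> ?N"
        using h unfolding E_eq_generate_E_gens by (blast intro: generate.incl)
      then show ?thesis by (rule subgroup_gcomm_swap[OF N h y_carrier])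
    next
      case (square z)
      have z: "z \<in> E G A l (m - 1)" "z \<in> carrier G"
        using square(2) E_gens_subset_carrier unfolding E_eq_generate_E_gens
        by (auto intro: generate.incl)
      define u where "u = gcomm G z h"
      have u: "u \<in> E G A (l + 1) m"
        using comm_E[OF z(1) h] less.prems square(3) by (simp add: u_def)
      have comm_u: "gcomm G a b \<in> ?N" if "a \<in> E G A (l + 1) m" "b \<in> carrier G" for a b
        using comm_E[OF that] less.prems square(3) E_antimono[of "l + 1" "l + 2" A "m + 1"] by auto
      have "gcomm G z u \<in> ?N"
        using comm_u[OF u z(2)] u E_subset_carrier z(2) by (blast intro: subgroup_gcomm_swap[OF N])
      moreover have "u \<otimes> u \<in> ?N"
        using E_square_closed[OF _ u] comm_u E_subset_carrier by blast
      ultimately show ?thesis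
        unfolding square(1) gcomm_square_left[OF z(2) h] u_def[symmetric]
        by (rule subgroup.m_closed[OF N])
    qed
  qed
qed

end

theorem corollary5p8:
  fixes H (structure) and A :: "'a set"
  assumes "group H"
    and "A = {} \<or> A \<lhd> H"
  shows "\<forall>l m. 1 \<le> l \<and> l \<le> m \<longrightarrow>
           comm_sub H (E H A l m) (carrier H) \<subseteq> E H A (l + 1) (m + 1) \<and>
           comm_sub H (E H {} l m) (carrier H) \<subseteq> E H {} (l + 1) (m + 1)"
  using group.comm_sub_E_subset[OF assms] group.comm_sub_E_subset[OF assms(1), of "{}"] by blast

end
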